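(* For $n\ge1$ let $X_n=(-1/n,1/n)\subseteq\mathbb R$ and let $X$ be the pro-set given by the inverse system $(X_n)_{n\ge1}$ with inclusion maps. Then $X$ carries the structure of an abelian group object in $\operatorname{Pro}(\mathbf{Set})$ with neutral element given by $0\in X_n$, inverse given levelwise by $x\mapsto-x$ on $X_n$, and addition $X\times X\to X$ given at index $n$ by $X_{2n}\times X_{2n}\to X_n$, $(x,y)\mapsto x+y$. This group object is nontrivial, but every homomorphism of group objects $G\to X$ in $\operatorname{Pro}(\mathbf{Set})$ from (the image of) a pro-group $G$ is trivial. In particular, $X$ is not isomorphic to the image of any pro-group, so the canonical functor $\operatorname{Pro}(\mathbf{Grp})\to\mathrm{Grp}(\operatorname{Pro}(\mathbf{Set}))$ is not an equivalence.
   Context: For a category $\mathcal C$, $\operatorname{Pro}(\mathcal C)$ is its pro-completion: objects are inverse systems, i.e. functors $X\colon \mathcal I_X^{op}\to\mathcal C$ with $\mathcal I_X$ a small filtered category, and $\operatorname{Hom}_{\operatorname{Pro}(\mathcal C)}(X,Y)=\varprojlim_{j\in\mathcal I_Y}\varinjlim_{i\in\mathcal I_X}\mathcal C(X_i,Y_j)$. $\mathrm{Grp}(\mathcal D)$ is the category of group objects in a category $\mathcal D$ with finite products; the canonical functor $\operatorname{Pro}(\mathbf{Grp})\to\mathrm{Grp}(\operatorname{Pro}(\mathbf{Set}))$ uses levelwise operations. *)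

theory Defs
  imports Complex_Main "HOL-Algebra.Group"
begin

text \<open>A small category: objects of type 'o, arrows of type 'a.
  cCmp C g f is the composite g o f (defined when cCod C f = cDom C g).\<close>
record ('o, 'a) cat =
  cOb  :: "'o set"
  cAr  :: "'a set"
  cDom :: "'a \<Rightarrow> 'o"
  cCod :: "'a \<Rightarrow> 'o"
  cId  :: "'o \<Rightarrow> 'a"
  cCmp :: "'a \<Rightarrow> 'a \<Rightarrow> 'a"

definition arrs :: "('o, 'a) cat \<Rightarrow> 'o \<Rightarrow> 'o \<Rightarrow> 'a set" where
  "arrs C i j = {u \<in> cAr C. cDom C u = i \<and> cCod C u = j}"

definition category :: "('o, 'a) cat \<Rightarrow> bool" where
  "category C \<longleftrightarrow>
     (\<forall>u\<in>cAr C. cDom C u \<in> cOb C \<and> cCod C u \<in> cOb C) \<and>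
     (\<forall>i\<in>cOb C. cId C i \<in> arrs C i i) \<and>
     (\<forall>f\<in>cAr C. \<forall>g\<in>cAr C. cCod C f = cDom C g \<longrightarrow>
         cCmp C g f \<in> arrs C (cDom C f) (cCod C g)) \<and>
     (\<forall>u\<in>cAr C. cCmp C u (cId C (cDom C u)) = u \<and> cCmp C (cId C (cCod C u)) u = u) \<and>
     (\<forall>f\<in>cAr C. \<forall>g\<in>cAr C. \<forall>h\<in>cAr C. cCod C f = cDom C g \<longrightarrow> cCod C g = cDom C h \<longrightarrow>
         cCmp C h (cCmp C g f) = cCmp C (cCmp C h g) f)"

definition filtered_cat :: "('o, 'a) cat \<Rightarrow> bool" where
  "filtered_cat C \<longleftrightarrow> category C \<and> cOb C \<noteq> {} \<and>
     (\<forall>i\<in>cOb C. \<forall>j\<in>cOb C. \<exists>k\<in>cOb C. arrs C i k \<noteq> {} \<and> arrs C j k \<noteq> {}) \<and>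
     (\<forall>i\<in>cOb C. \<forall>j\<in>cOb C. \<forall>u\<in>arrs C i j. \<forall>v\<in>arrs C i j.
         \<exists>k\<in>cOb C. \<exists>w\<in>arrs C j k. cCmp C w u = cCmp C w v)"

section \<open>Pro-sets: functors I^op -> Set with I small filtered\<close>

text \<open>pFib X i is the set X_i; for an arrow u : i -> j of I, pTr X u is the
  transition map X_j -> X_i.\<close>
record ('o, 'a, 'x) proset =
  pIdx :: "('o, 'a) cat"
  pFib :: "'o \<Rightarrow> 'x set"
  pTr  :: "'a \<Rightarrow> 'x \<Rightarrow> 'x"

definition pro_set :: "('o, 'a, 'x) proset \<Rightarrow> bool" where
  "pro_set X \<longleftrightarrow> filtered_cat (pIdx X) \<and>
     (\<forall>u\<in>cAr (pIdx X). pTr X u \<in> pFib X (cCod (pIdx X) u) \<rightarrow> pFib X (cDom (pIdx X) u)) \<and>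
     (\<forall>i\<in>cOb (pIdx X). \<forall>x\<in>pFib X i. pTr X (cId (pIdx X) i) x = x) \<and>
     (\<forall>f\<in>cAr (pIdx X). \<forall>g\<in>cAr (pIdx X). cCod (pIdx X) f = cDom (pIdx X) g \<longrightarrow>
        (\<forall>x\<in>pFib X (cCod (pIdx X) g).
           pTr X (cCmp (pIdx X) g f) x = pTr X f (pTr X g x)))"

text \<open>Equality of germs in colim_i Set(X_i, T): representatives (i,f), (i',f').\<close>
definition germ_eq :: "('o, 'a, 'x) proset \<Rightarrow> 'o \<times> ('x \<Rightarrow> 'y) \<Rightarrow> 'o \<times> ('x \<Rightarrow> 'y) \<Rightarrow> bool" where
  "germ_eq X r s \<longleftrightarrow> (\<exists>k\<in>cOb (pIdx X). \<exists>u\<in>arrs (pIdx X) (fst r) k. \<exists>v\<in>arrs (pIdx X) (fst s) k.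
       \<forall>x\<in>pFib X k. snd r (pTr X u x) = snd s (pTr X v x))"

text \<open>A morphism X -> Y in Pro(Set), i.e. an element of lim_j colim_i Set(X_i,Y_j),
  given by a choice of representative (i_j, f_j : X_(i_j) -> Y_j) for each j,
  compatible with the transition maps of Y up to germ equality.\<close>
definition pro_hom :: "('ox, 'ax, 'x) proset \<Rightarrow> ('oy, 'ay, 'y) proset \<Rightarrow> ('oy \<Rightarrow> 'ox \<times> ('x \<Rightarrow> 'y)) \<Rightarrow> bool" where
  "pro_hom X Y \<phi> \<longleftrightarrow>
     (\<forall>j\<in>cOb (pIdx Y). fst (\<phi> j) \<in> cOb (pIdx X) \<and> snd (\<phi> j) \<in> pFib X (fst (\<phi> j)) \<rightarrow> pFib Y j) \<and>
     (\<forall>w\<in>cAr (pIdx Y). germ_eq X (fst (\<phi> (cCod (pIdx Y) w)), pTr Y w \<circ> snd (\<phi> (cCod (pIdx Y) w)))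
                                   (\<phi> (cDom (pIdx Y) w)))"

definition pro_eq :: "('ox, 'ax, 'x) proset \<Rightarrow> ('oy, 'ay, 'y) proset \<Rightarrow> ('oy \<Rightarrow> 'ox \<times> ('x \<Rightarrow> 'y)) \<Rightarrow> ('oy \<Rightarrow> 'ox \<times> ('x \<Rightarrow> 'y)) \<Rightarrow> bool" where
  "pro_eq X Y \<phi> \<psi> \<longleftrightarrow> (\<forall>j\<in>cOb (pIdx Y). germ_eq X (\<phi> j) (\<psi> j))"

definition pro_id :: "'o \<Rightarrow> 'o \<times> ('x \<Rightarrow> 'x)" where
  "pro_id = (\<lambda>i. (i, id))"

definition pro_comp :: "('oz \<Rightarrow> 'oy \<times> ('y \<Rightarrow> 'z)) \<Rightarrow> ('oy \<Rightarrow> 'ox \<times> ('x \<Rightarrow> 'y)) \<Rightarrow> ('oz \<Rightarrow> 'ox \<times> ('x \<Rightarrow> 'z))" where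
  "pro_comp \<psi> \<phi> = (\<lambda>k. (fst (\<phi> (fst (\<psi> k))), snd (\<psi> k) \<circ> snd (\<phi> (fst (\<psi> k)))))"

definition unit_cat :: "(unit, unit) cat" where
  "unit_cat = \<lparr>cOb = {()}, cAr = {()}, cDom = (\<lambda>_. ()), cCod = (\<lambda>_. ()),
               cId = (\<lambda>_. ()), cCmp = (\<lambda>_ _. ())\<rparr>"

definition pro_one :: "(unit, unit, unit) proset" where
  "pro_one = \<lparr>pIdx = unit_cat, pFib = (\<lambda>_. {()}), pTr = (\<lambda>_ x. x)\<rparr>"

definition pro_bang :: "('o, 'a, 'x) proset \<Rightarrow> unit \<Rightarrow> 'o \<times> ('x \<Rightarrow> unit)" where
  "pro_bang X = (\<lambda>_. (SOME i. i \<in> cOb (pIdx X), \<lambda>_. ()))"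

definition cat_prod :: "('o1, 'a1) cat \<Rightarrow> ('o2, 'a2) cat \<Rightarrow> ('o1 \<times> 'o2, 'a1 \<times> 'a2) cat" where
  "cat_prod C D = \<lparr>cOb = cOb C \<times> cOb D, cAr = cAr C \<times> cAr D,
     cDom = map_prod (cDom C) (cDom D), cCod = map_prod (cCod C) (cCod D),
     cId = (\<lambda>p. (cId C (fst p), cId D (snd p))),
     cCmp = (\<lambda>g f. (cCmp C (fst g) (fst f), cCmp D (snd g) (snd f)))\<rparr>"

definition pro_prod :: "('o1, 'a1, 'x) proset \<Rightarrow> ('o2, 'a2, 'y) proset \<Rightarrow> ('o1 \<times> 'o2, 'a1 \<times> 'a2, 'x \<times> 'y) proset" where
  "pro_prod X Y = \<lparr>pIdx = cat_prod (pIdx X) (pIdx Y),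
     pFib = (\<lambda>p. pFib X (fst p) \<times> pFib Y (snd p)),
     pTr = (\<lambda>u. map_prod (pTr X (fst u)) (pTr Y (snd u)))\<rparr>"

definition pro_fst :: "('o1, 'a1, 'x) proset \<Rightarrow> ('o2, 'a2, 'y) proset \<Rightarrow> 'o1 \<Rightarrow> ('o1 \<times> 'o2) \<times> ('x \<times> 'y \<Rightarrow> 'x)" where
  "pro_fst X Y = (\<lambda>i. ((i, SOME j. j \<in> cOb (pIdx Y)), fst))"

definition pro_snd :: "('o1, 'a1, 'x) proset \<Rightarrow> ('o2, 'a2, 'y) proset \<Rightarrow> 'o2 \<Rightarrow> ('o1 \<times> 'o2) \<times> ('x \<times> 'y \<Rightarrow> 'y)" where
  "pro_snd X Y = (\<lambda>j. ((SOME i. i \<in> cOb (pIdx X), j), snd))"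

definition pro_pair :: "('oz, 'az, 'z) proset \<Rightarrow> ('ox \<Rightarrow> 'oz \<times> ('z \<Rightarrow> 'x)) \<Rightarrow> ('oy \<Rightarrow> 'oz \<times> ('z \<Rightarrow> 'y))
     \<Rightarrow> ('ox \<times> 'oy \<Rightarrow> 'oz \<times> ('z \<Rightarrow> 'x \<times> 'y))" where
  "pro_pair Z \<phi> \<psi> = (\<lambda>p.
     let i = fst p; j = snd p;
         c = (SOME c. fst c \<in> cOb (pIdx Z) \<and> fst (snd c) \<in> arrs (pIdx Z) (fst (\<phi> i)) (fst c)
                      \<and> snd (snd c) \<in> arrs (pIdx Z) (fst (\<psi> j)) (fst c))
     in (fst c, \<lambda>z. (snd (\<phi> i) (pTr Z (fst (snd c)) z), snd (\<psi> j) (pTr Z (snd (snd c)) z))))"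

definition pro_prod_map :: "('o1, 'a1, 'x) proset \<Rightarrow> ('o2, 'a2, 'y) proset
     \<Rightarrow> ('o3 \<Rightarrow> 'o1 \<times> ('x \<Rightarrow> 'x')) \<Rightarrow> ('o4 \<Rightarrow> 'o2 \<times> ('y \<Rightarrow> 'y'))
     \<Rightarrow> ('o3 \<times> 'o4 \<Rightarrow> ('o1 \<times> 'o2) \<times> ('x \<times> 'y \<Rightarrow> 'x' \<times> 'y'))" where
  "pro_prod_map X Y f g = pro_pair (pro_prod X Y) (pro_comp f (pro_fst X Y)) (pro_comp g (pro_snd X Y))"

definition pro_assoc :: "('o, 'a, 'x) proset \<Rightarrow> ('o \<times> ('o \<times> 'o) \<Rightarrow> (('o \<times> 'o) \<times> 'o) \<times> (('x \<times> 'x) \<times> 'x \<Rightarrow> 'x \<times> ('x \<times> 'x)))" where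
  "pro_assoc X = pro_pair (pro_prod (pro_prod X X) X)
      (pro_comp (pro_fst X X) (pro_fst (pro_prod X X) X))
      (pro_pair (pro_prod (pro_prod X X) X)
         (pro_comp (pro_snd X X) (pro_fst (pro_prod X X) X))
         (pro_snd (pro_prod X X) X))"

definition pro_swap :: "('o, 'a, 'x) proset \<Rightarrow> ('o \<times> 'o \<Rightarrow> ('o \<times> 'o) \<times> ('x \<times> 'x \<Rightarrow> 'x \<times> 'x))" where
  "pro_swap X = pro_pair (pro_prod X X) (pro_snd X X) (pro_fst X X)"

definition group_obj :: "('o, 'a, 'x) proset \<Rightarrow> ('o \<Rightarrow> unit \<times> (unit \<Rightarrow> 'x)) \<Rightarrow> ('o \<Rightarrow> 'o \<times> ('x \<Rightarrow> 'x))
     \<Rightarrow> ('o \<Rightarrow> ('o \<times> 'o) \<times> ('x \<times> 'x \<Rightarrow> 'x)) \<Rightarrow> bool" where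
  "group_obj X e iv m \<longleftrightarrow> pro_set X \<and>
     pro_hom pro_one X e \<and> pro_hom X X iv \<and> pro_hom (pro_prod X X) X m \<and>
     pro_eq (pro_prod (pro_prod X X) X) X
        (pro_comp m (pro_prod_map (pro_prod X X) X m pro_id))
        (pro_comp m (pro_comp (pro_prod_map X (pro_prod X X) pro_id m) (pro_assoc X))) \<and>
     pro_eq X X (pro_comp m (pro_pair X (pro_comp e (pro_bang X)) pro_id)) pro_id \<and>
     pro_eq X X (pro_comp m (pro_pair X pro_id (pro_comp e (pro_bang X)))) pro_id \<and>
     pro_eq X X (pro_comp m (pro_pair X iv pro_id)) (pro_comp e (pro_bang X)) \<and>
     pro_eq X X (pro_comp m (pro_pair X pro_id iv)) (pro_comp e (pro_bang X))"

definition abelian_group_obj :: "('o, 'a, 'x) proset \<Rightarrow> ('o \<Rightarrow> unit \<times> (unit \<Rightarrow> 'x)) \<Rightarrow> ('o \<Rightarrow> 'o \<times> ('x \<Rightarrow> 'x))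
     \<Rightarrow> ('o \<Rightarrow> ('o \<times> 'o) \<times> ('x \<times> 'x \<Rightarrow> 'x)) \<Rightarrow> bool" where
  "abelian_group_obj X e iv m \<longleftrightarrow> group_obj X e iv m \<and>
     pro_eq (pro_prod X X) X (pro_comp m (pro_swap X)) m"

definition grp_obj_hom :: "('o1, 'a1, 'x) proset \<Rightarrow> ('o1 \<Rightarrow> ('o1 \<times> 'o1) \<times> ('x \<times> 'x \<Rightarrow> 'x))
     \<Rightarrow> ('o2, 'a2, 'y) proset \<Rightarrow> ('o2 \<Rightarrow> ('o2 \<times> 'o2) \<times> ('y \<times> 'y \<Rightarrow> 'y))
     \<Rightarrow> ('o2 \<Rightarrow> 'o1 \<times> ('x \<Rightarrow> 'y)) \<Rightarrow> bool" where
  "grp_obj_hom G mG H mH \<phi> \<longleftrightarrow> pro_hom G H \<phi> \<and>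
     pro_eq (pro_prod G G) H (pro_comp \<phi> mG) (pro_comp mH (pro_prod_map G G \<phi> \<phi>))"

definition grp_obj_iso :: "('o1, 'a1, 'x) proset \<Rightarrow> ('o1 \<Rightarrow> ('o1 \<times> 'o1) \<times> ('x \<times> 'x \<Rightarrow> 'x))
     \<Rightarrow> ('o2, 'a2, 'y) proset \<Rightarrow> ('o2 \<Rightarrow> ('o2 \<times> 'o2) \<times> ('y \<times> 'y \<Rightarrow> 'y)) \<Rightarrow> bool" where
  "grp_obj_iso G mG H mH \<longleftrightarrow> (\<exists>\<phi> \<psi>. grp_obj_hom G mG H mH \<phi> \<and> grp_obj_hom H mH G mG \<psi> \<and>
      pro_eq G G (pro_comp \<psi> \<phi>) pro_id \<and> pro_eq H H (pro_comp \<phi> \<psi>) pro_id)"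

definition pro_group :: "('o, 'a, 'x) proset \<Rightarrow> ('o \<Rightarrow> 'x monoid) \<Rightarrow> bool" where
  "pro_group X grp \<longleftrightarrow> pro_set X \<and>
     (\<forall>i\<in>cOb (pIdx X). group (grp i) \<and> carrier (grp i) = pFib X i) \<and>
     (\<forall>u\<in>cAr (pIdx X). pTr X u \<in> hom (grp (cCod (pIdx X) u)) (grp (cDom (pIdx X) u)))"

definition pg_mult :: "('o \<Rightarrow> 'x monoid) \<Rightarrow> 'o \<Rightarrow> ('o \<times> 'o) \<times> ('x \<times> 'x \<Rightarrow> 'x)" where
  "pg_mult grp = (\<lambda>i. ((i, i), \<lambda>p. fst p \<otimes>\<^bsub>grp i\<^esub> snd p))"

definition pg_one :: "('o \<Rightarrow> 'x monoid) \<Rightarrow> 'o \<Rightarrow> unit \<times> (unit \<Rightarrow> 'x)" where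
  "pg_one grp = (\<lambda>i. ((), \<lambda>_. \<one>\<^bsub>grp i\<^esub>))"

definition pg_inv :: "('o \<Rightarrow> 'x monoid) \<Rightarrow> 'o \<Rightarrow> 'o \<times> ('x \<Rightarrow> 'x)" where
  "pg_inv grp = (\<lambda>i. (i, \<lambda>x. inv\<^bsub>grp i\<^esub> x))"

definition nat_pos_cat :: "(nat, nat \<times> nat) cat" where
  "nat_pos_cat = \<lparr>cOb = {n. 1 \<le> n}, cAr = {(m, n). 1 \<le> m \<and> m \<le> n},
     cDom = fst, cCod = snd, cId = (\<lambda>n. (n, n)), cCmp = (\<lambda>g f. (fst f, snd g))\<rparr>"

definition realX :: "(nat, nat \<times> nat, real) proset" where
  "realX = \<lparr>pIdx = nat_pos_cat, pFib = (\<lambda>n. {-1 / real n <..< 1 / real n}), pTr = (\<lambda>_ x. x)\<rparr>"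

definition realX_zero :: "nat \<Rightarrow> unit \<times> (unit \<Rightarrow> real)" where
  "realX_zero = (\<lambda>n. ((), \<lambda>_. 0))"

definition realX_neg :: "nat \<Rightarrow> nat \<times> (real \<Rightarrow> real)" where
  "realX_neg = (\<lambda>n. (n, \<lambda>x. - x))"

definition realX_add :: "nat \<Rightarrow> (nat \<times> nat) \<times> (real \<times> real \<Rightarrow> real)" where
  "realX_add = (\<lambda>n. ((2 * n, 2 * n), \<lambda>p. fst p + snd p))"

end

theory Submission
  imports Defs
begin

text \<open>X is a group object although no X n is closed under addition: the sum of two points of
  X (2 n) lies in X n, and as all transition maps are inclusions the group axioms can be checked
  pointwise. A homomorphism from a pro-group G is represented at level n by a map f from some
  G i into (-1/n, 1/n). Its multiplicativity at level n, together with the compatibility of the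
  representatives at levels n and 2 n, shows that after pulling back along a suitable arrow
  i \<rightarrow> K of the filtered index category, f becomes a homomorphism G K \<rightarrow> \<real> bounded by 1/n,
  hence zero since f (x ^ m) = m f x. So every homomorphism G \<rightarrow> X is trivial, which is
  incompatible with an isomorphism because X has nonzero points at every level.\<close>

section \<open>Pro-sets\<close>

definition directed :: "('o, 'a) cat \<Rightarrow> bool" where
  "directed C \<longleftrightarrow> (\<forall>i\<in>cOb C. \<forall>j\<in>cOb C. \<exists>k\<in>cOb C. arrs C i k \<noteq> {} \<and> arrs C j k \<noteq> {})"

lemma arrs_cat_prod: "arrs (cat_prod C D) (a, b) (c, d) = arrs C a c \<times> arrs D b d"
  by (auto simp: arrs_def cat_prod_def)

lemma cOb_cat_prod [simp]: "cOb (cat_prod C D) = cOb C \<times> cOb D"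
  by (simp add: cat_prod_def)

lemma directed_cat_prod: "directed C \<Longrightarrow> directed D \<Longrightarrow> directed (cat_prod C D)"
  unfolding directed_def by (clarsimp simp: arrs_cat_prod) (metis Sigma_empty1 Sigma_empty2 arrs_cat_prod)

lemma filtered_cat_directed: "filtered_cat C \<Longrightarrow> directed C"
  by (simp add: filtered_cat_def directed_def)

lemma pro_prod_simps [simp]:
  "pIdx (pro_prod X Y) = cat_prod (pIdx X) (pIdx Y)"
  "pFib (pro_prod X Y) p = pFib X (fst p) \<times> pFib Y (snd p)"
  "pTr (pro_prod X Y) u = map_prod (pTr X (fst u)) (pTr Y (snd u))"
  by (simp_all add: pro_prod_def)

lemma directed_pro_prod:
  "directed (pIdx X) \<Longrightarrow> directed (pIdx Y) \<Longrightarrow> directed (pIdx (pro_prod X Y))"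
  by (simp add: directed_cat_prod)

lemma pro_prod_nonempty:
  "cOb (pIdx X) \<noteq> {} \<Longrightarrow> cOb (pIdx Y) \<noteq> {} \<Longrightarrow> cOb (pIdx (pro_prod X Y)) \<noteq> {}"
  by simp

lemma pro_one_simps [simp]: "pIdx pro_one = unit_cat" "pTr pro_one u = id" "pFib pro_one i = {()}"
  by (auto simp: pro_one_def)

lemma cOb_unit_cat [simp]: "cOb unit_cat = {()}"
  by (simp add: unit_cat_def)

lemma directed_pro_one: "directed (pIdx pro_one)"
  by (simp add: directed_def arrs_def unit_cat_def)

context
  fixes G :: "('o, 'a, 'x) proset"
  assumes G: "pro_set G"
begin

lemma pro_set_category: "category (pIdx G)"
  using G by (simp add: pro_set_def filtered_cat_def)

lemma pro_set_arrs_objs: "u \<in> arrs (pIdx G) i j \<Longrightarrow> i \<in> cOb (pIdx G) \<and> j \<in> cOb (pIdx G)"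
  using pro_set_category unfolding category_def arrs_def by blast

lemma pro_set_comp_arrs:
  "u \<in> arrs (pIdx G) i j \<Longrightarrow> w \<in> arrs (pIdx G) j k \<Longrightarrow> cCmp (pIdx G) w u \<in> arrs (pIdx G) i k"
  using pro_set_category unfolding category_def arrs_def by force

lemma pro_set_comp_assoc:
  "u \<in> arrs (pIdx G) i j \<Longrightarrow> v \<in> arrs (pIdx G) j k \<Longrightarrow> w \<in> arrs (pIdx G) k l \<Longrightarrow>
   cCmp (pIdx G) w (cCmp (pIdx G) v u) = cCmp (pIdx G) (cCmp (pIdx G) w v) u"
  using pro_set_category unfolding category_def arrs_def by force

lemma pro_set_tr_in: "u \<in> arrs (pIdx G) i j \<Longrightarrow> x \<in> pFib G j \<Longrightarrow> pTr G u x \<in> pFib G i"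
  using G unfolding pro_set_def arrs_def by force

lemma pro_set_tr_comp:
  "u \<in> arrs (pIdx G) i j \<Longrightarrow> w \<in> arrs (pIdx G) j k \<Longrightarrow> x \<in> pFib G k \<Longrightarrow>
   pTr G (cCmp (pIdx G) w u) x = pTr G u (pTr G w x)"
  using G unfolding pro_set_def arrs_def by force

lemma pro_set_cocone:
  assumes "i \<in> cOb (pIdx G)" "j \<in> cOb (pIdx G)"
  obtains k a b where "k \<in> cOb (pIdx G)" "a \<in> arrs (pIdx G) i k" "b \<in> arrs (pIdx G) j k"
  using G assms that unfolding pro_set_def filtered_cat_def by blast

lemma pro_set_coequalize:
  assumes "u \<in> arrs (pIdx G) i j" "v \<in> arrs (pIdx G) i j"
  obtains k w where "k \<in> cOb (pIdx G)" "w \<in> arrs (pIdx G) j k"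
    "cCmp (pIdx G) w u = cCmp (pIdx G) w v"
proof -
  have "i \<in> cOb (pIdx G)" "j \<in> cOb (pIdx G)" using pro_set_arrs_objs[OF assms(1)] by auto
  then show thesis using G assms that unfolding pro_set_def filtered_cat_def by blast
qed

lemma pro_set_complete_span:
  assumes u: "u \<in> arrs (pIdx G) i a" and v: "v \<in> arrs (pIdx G) i b"
  obtains k t1 t2 where "k \<in> cOb (pIdx G)" "t1 \<in> arrs (pIdx G) a k" "t2 \<in> arrs (pIdx G) b k"
    "cCmp (pIdx G) t1 u = cCmp (pIdx G) t2 v"
proof -
  obtain k0 p q where pq: "p \<in> arrs (pIdx G) a k0" "q \<in> arrs (pIdx G) b k0"
    using pro_set_cocone pro_set_arrs_objs[OF u] pro_set_arrs_objs[OF v] by metis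
  obtain k w where kw: "k \<in> cOb (pIdx G)" "w \<in> arrs (pIdx G) k0 k"
    "cCmp (pIdx G) w (cCmp (pIdx G) p u) = cCmp (pIdx G) w (cCmp (pIdx G) q v)"
    using pro_set_coequalize[OF pro_set_comp_arrs[OF u pq(1)] pro_set_comp_arrs[OF v pq(2)]] by metis
  show thesis
  proof (rule that)
    show "cCmp (pIdx G) w p \<in> arrs (pIdx G) a k" "cCmp (pIdx G) w q \<in> arrs (pIdx G) b k"
      using pro_set_comp_arrs pq kw by auto
    show "cCmp (pIdx G) (cCmp (pIdx G) w p) u = cCmp (pIdx G) (cCmp (pIdx G) w q) v"
      using kw(3) pro_set_comp_assoc[OF u pq(1) kw(2)] pro_set_comp_assoc[OF v pq(2) kw(2)] by simp
  qed (use kw in simp)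
qed

lemma pro_set_relation_single_level:
  fixes f :: "'x \<Rightarrow> 'b::plus" and f' :: "'x \<Rightarrow> 'b" and m :: "'x \<Rightarrow> 'x \<Rightarrow> 'x"
  assumes u1: "u1 \<in> arrs (pIdx G) i k1" and u2: "u2 \<in> arrs (pIdx G) i k2"
    and \<alpha>: "\<alpha> \<in> arrs (pIdx G) i' k1" and \<beta>: "\<beta> \<in> arrs (pIdx G) i' k2"
    and rel: "\<And>g h. g \<in> pFib G k1 \<Longrightarrow> h \<in> pFib G k2 \<Longrightarrow>
       f (m (pTr G u1 g) (pTr G u2 h)) = f' (pTr G \<alpha> g) + f' (pTr G \<beta> h)"
  obtains K P Q where "K \<in> cOb (pIdx G)" "P \<in> arrs (pIdx G) i K" "Q \<in> arrs (pIdx G) i' K"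
    "\<And>x y. x \<in> pFib G K \<Longrightarrow> y \<in> pFib G K \<Longrightarrow>
       f (m (pTr G P x) (pTr G P y)) = f' (pTr G Q x) + f' (pTr G Q y)"
proof -
  let ?c = "cCmp (pIdx G)"
  obtain K0 t1 t2 where t1: "t1 \<in> arrs (pIdx G) k1 K0" and t2: "t2 \<in> arrs (pIdx G) k2 K0"
    and span: "?c t1 u1 = ?c t2 u2"
    using pro_set_complete_span[OF u1 u2] by blast
  have \<alpha>0: "?c t1 \<alpha> \<in> arrs (pIdx G) i' K0" and \<beta>0: "?c t2 \<beta> \<in> arrs (pIdx G) i' K0"
    using pro_set_comp_arrs[OF \<alpha> t1] pro_set_comp_arrs[OF \<beta> t2] .
  obtain K w where K: "K \<in> cOb (pIdx G)" and w: "w \<in> arrs (pIdx G) K0 K"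
    and coeq: "?c w (?c t1 \<alpha>) = ?c w (?c t2 \<beta>)"
    using pro_set_coequalize[OF \<alpha>0 \<beta>0] by blast
  show thesis
  proof (rule that[of K "?c w (?c t1 u1)" "?c w (?c t1 \<alpha>)"])
    show "?c w (?c t1 u1) \<in> arrs (pIdx G) i K" "?c w (?c t1 \<alpha>) \<in> arrs (pIdx G) i' K"
      using pro_set_comp_arrs[OF pro_set_comp_arrs[OF u1 t1] w] pro_set_comp_arrs[OF \<alpha>0 w] .
    fix x y assume x: "x \<in> pFib G K" and y: "y \<in> pFib G K"
    have x0: "pTr G w x \<in> pFib G K0" and y0: "pTr G w y \<in> pFib G K0"
      using pro_set_tr_in[OF w] x y by auto
    have u1': "?c t1 u1 \<in> arrs (pIdx G) i K0" and u2': "?c t2 u2 \<in> arrs (pIdx G) i K0"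
      using pro_set_comp_arrs u1 u2 t1 t2 by auto
    have "pTr G (?c w (?c t1 u1)) x = pTr G u1 (pTr G t1 (pTr G w x))"
      using pro_set_tr_comp[OF u1' w x] pro_set_tr_comp[OF u1 t1 x0] by simp
    moreover have "pTr G (?c w (?c t1 \<alpha>)) x = pTr G \<alpha> (pTr G t1 (pTr G w x))"
      using pro_set_tr_comp[OF \<alpha>0 w x] pro_set_tr_comp[OF \<alpha> t1 x0] by simp
    moreover have "pTr G (?c w (?c t1 u1)) y = pTr G u2 (pTr G t2 (pTr G w y))"
      using pro_set_tr_comp[OF u2' w y] pro_set_tr_comp[OF u2 t2 y0] span by simp
    moreover have "pTr G (?c w (?c t1 \<alpha>)) y = pTr G \<beta> (pTr G t2 (pTr G w y))"
      using pro_set_tr_comp[OF \<beta>0 w y] pro_set_tr_comp[OF \<beta> t2 y0] coeq by simp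
    moreover have "pTr G t1 (pTr G w x) \<in> pFib G k1" "pTr G t2 (pTr G w y) \<in> pFib G k2"
      using pro_set_tr_in[OF t1 x0] pro_set_tr_in[OF t2 y0] .
    ultimately show "f (m (pTr G (?c w (?c t1 u1)) x) (pTr G (?c w (?c t1 u1)) y))
        = f' (pTr G (?c w (?c t1 \<alpha>)) x) + f' (pTr G (?c w (?c t1 \<alpha>)) y)"
      using rel by simp
  qed (use K in simp)
qed

lemma pro_set_relation_identify:
  fixes f f' :: "'x \<Rightarrow> 'b::plus" and m :: "'x \<Rightarrow> 'x \<Rightarrow> 'x"
  assumes P: "P \<in> arrs (pIdx G) i K" and Q: "Q \<in> arrs (pIdx G) i' K"
    and rel: "\<And>x y. x \<in> pFib G K \<Longrightarrow> y \<in> pFib G K \<Longrightarrow>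
       f (m (pTr G P x) (pTr G P y)) = f' (pTr G Q x) + f' (pTr G Q y)"
    and r: "r \<in> arrs (pIdx G) i' k" and s: "s \<in> arrs (pIdx G) i k"
    and agree: "\<And>x. x \<in> pFib G k \<Longrightarrow> f' (pTr G r x) = f (pTr G s x)"
  obtains K' P' where "K' \<in> cOb (pIdx G)" "P' \<in> arrs (pIdx G) i K'"
    "\<And>x y. x \<in> pFib G K' \<Longrightarrow> y \<in> pFib G K' \<Longrightarrow>
       f (m (pTr G P' x) (pTr G P' y)) = f (pTr G P' x) + f (pTr G P' y)"
proof -
  let ?c = "cCmp (pIdx G)"
  obtain K1 z z' where z: "z \<in> arrs (pIdx G) K K1" and z': "z' \<in> arrs (pIdx G) k K1"
    and span: "?c z Q = ?c z' r"
    using pro_set_complete_span[OF Q r] by blast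
  have zP: "?c z P \<in> arrs (pIdx G) i K1" and z's: "?c z' s \<in> arrs (pIdx G) i K1"
    using pro_set_comp_arrs[OF P z] pro_set_comp_arrs[OF s z'] .
  obtain K' w where K': "K' \<in> cOb (pIdx G)" and w: "w \<in> arrs (pIdx G) K1 K'"
    and coeq: "?c w (?c z P) = ?c w (?c z' s)"
    using pro_set_coequalize[OF zP z's] by blast
  have via_P: "pTr G (?c w (?c z P)) x = pTr G P (pTr G z (pTr G w x))"
    and via_Q: "f' (pTr G Q (pTr G z (pTr G w x))) = f (pTr G (?c w (?c z P)) x)"
    if x: "x \<in> pFib G K'" for x
  proof -
    have x1: "pTr G w x \<in> pFib G K1" using pro_set_tr_in[OF w x] .
    show "pTr G (?c w (?c z P)) x = pTr G P (pTr G z (pTr G w x))"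
      using pro_set_tr_comp[OF zP w x] pro_set_tr_comp[OF P z x1] by simp
    have "pTr G Q (pTr G z (pTr G w x)) = pTr G r (pTr G z' (pTr G w x))"
      using pro_set_tr_comp[OF Q z x1] pro_set_tr_comp[OF r z' x1] span by simp
    then have "f' (pTr G Q (pTr G z (pTr G w x))) = f (pTr G s (pTr G z' (pTr G w x)))"
      using agree[OF pro_set_tr_in[OF z' x1]] by simp
    also have "\<dots> = f (pTr G (?c w (?c z' s)) x)"
      using pro_set_tr_comp[OF z's w x] pro_set_tr_comp[OF s z' x1] by simp
    finally show "f' (pTr G Q (pTr G z (pTr G w x))) = f (pTr G (?c w (?c z P)) x)"
      unfolding coeq .
  qed
  show thesis
  proof (rule that[OF K' pro_set_comp_arrs[OF zP w]])
    fix x y assume "x \<in> pFib G K'" "y \<in> pFib G K'"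
    moreover have "pTr G z (pTr G w x) \<in> pFib G K" "pTr G z (pTr G w y) \<in> pFib G K"
      using pro_set_tr_in[OF z pro_set_tr_in[OF w]] calculation by auto
    ultimately show "f (m (pTr G (?c w (?c z P)) x) (pTr G (?c w (?c z P)) y))
        = f (pTr G (?c w (?c z P)) x) + f (pTr G (?c w (?c z P)) y)"
      using rel via_P via_Q by simp
  qed
qed

end

section \<open>Pro-sets with inclusions as transition maps\<close>

definition well_indexed :: "('ox, 'ax, 'x) proset \<Rightarrow> ('oy, 'ay, 'y) proset \<Rightarrow> ('oy \<Rightarrow> 'ox \<times> ('x \<Rightarrow> 'y)) \<Rightarrow> bool" where
  "well_indexed X Y \<phi> \<longleftrightarrow> (\<forall>j\<in>cOb (pIdx Y). fst (\<phi> j) \<in> cOb (pIdx X))"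

lemma well_indexed_pro_comp:
  "well_indexed Y Z \<psi> \<Longrightarrow> well_indexed X Y \<phi> \<Longrightarrow> well_indexed X Z (pro_comp \<psi> \<phi>)"
  by (simp add: well_indexed_def pro_comp_def)

lemma well_indexed_pro_id: "well_indexed X X pro_id"
  by (simp add: well_indexed_def pro_id_def)

lemma well_indexed_pro_fst: "cOb (pIdx Y) \<noteq> {} \<Longrightarrow> well_indexed (pro_prod X Y) X (pro_fst X Y)"
  by (auto simp: well_indexed_def pro_fst_def intro: someI)

lemma well_indexed_pro_snd: "cOb (pIdx X) \<noteq> {} \<Longrightarrow> well_indexed (pro_prod X Y) Y (pro_snd X Y)"
  by (auto simp: well_indexed_def pro_snd_def intro: someI)

lemma well_indexed_pro_bang: "cOb (pIdx X) \<noteq> {} \<Longrightarrow> well_indexed X pro_one (pro_bang X)"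
  by (auto simp: well_indexed_def pro_bang_def intro: someI)

lemma pro_pair_spec:
  assumes "directed (pIdx Z)" "fst (\<phi> i) \<in> cOb (pIdx Z)" "fst (\<psi> j) \<in> cOb (pIdx Z)"
  obtains k a b where "pro_pair Z \<phi> \<psi> (i, j) = (k, \<lambda>z. (snd (\<phi> i) (pTr Z a z), snd (\<psi> j) (pTr Z b z)))"
    "k \<in> cOb (pIdx Z)" "a \<in> arrs (pIdx Z) (fst (\<phi> i)) k" "b \<in> arrs (pIdx Z) (fst (\<psi> j)) k"
proof -
  let ?P = "\<lambda>c. fst c \<in> cOb (pIdx Z) \<and> fst (snd c) \<in> arrs (pIdx Z) (fst (\<phi> i)) (fst c)
                 \<and> snd (snd c) \<in> arrs (pIdx Z) (fst (\<psi> j)) (fst c)"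
  obtain k a b where "k \<in> cOb (pIdx Z)" "a \<in> arrs (pIdx Z) (fst (\<phi> i)) k" "b \<in> arrs (pIdx Z) (fst (\<psi> j)) k"
    using assms unfolding directed_def by blast
  then have "?P (k, a, b)" by simp
  then have c: "?P (SOME c. ?P c)" by (rule someI)
  have "pro_pair Z \<phi> \<psi> (i, j) = (fst (SOME c. ?P c),
      \<lambda>z. (snd (\<phi> i) (pTr Z (fst (snd (SOME c. ?P c))) z), snd (\<psi> j) (pTr Z (snd (snd (SOME c. ?P c))) z)))"
    unfolding pro_pair_def Let_def by simp
  with c show thesis by (intro that) auto
qed

lemma well_indexed_pro_pair:
  assumes Z: "directed (pIdx Z)" and "well_indexed Z X \<phi>" "well_indexed Z Y \<psi>"
  shows "well_indexed Z (pro_prod X Y) (pro_pair Z \<phi> \<psi>)"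
  unfolding well_indexed_def
proof
  fix p assume "p \<in> cOb (pIdx (pro_prod X Y))"
  then obtain i j where p: "p = (i, j)" and ij: "fst (\<phi> i) \<in> cOb (pIdx Z)" "fst (\<psi> j) \<in> cOb (pIdx Z)"
    using assms(2,3) by (auto simp: well_indexed_def)
  obtain k a b where "pro_pair Z \<phi> \<psi> (i, j) = (k, \<lambda>z. (snd (\<phi> i) (pTr Z a z), snd (\<psi> j) (pTr Z b z)))"
    "k \<in> cOb (pIdx Z)" "a \<in> arrs (pIdx Z) (fst (\<phi> i)) k" "b \<in> arrs (pIdx Z) (fst (\<psi> j)) k"
    by (rule pro_pair_spec[where \<phi> = \<phi> and \<psi> = \<psi>, OF Z ij])
  then show "fst (pro_pair Z \<phi> \<psi> p) \<in> cOb (pIdx Z)" by (simp add: p)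
qed

lemma pro_pair_snd_id_tr:
  "(\<And>u. pTr Z u = id) \<Longrightarrow> snd (pro_pair Z \<phi> \<psi> p) = (\<lambda>z. (snd (\<phi> (fst p)) z, snd (\<psi> (snd p)) z))"
  by (simp add: pro_pair_def Let_def)

lemma germ_eq_same_map_id_tr:
  assumes "\<And>u. pTr X u = id" "directed (pIdx X)" "fst r \<in> cOb (pIdx X)" "fst s \<in> cOb (pIdx X)"
    "snd r = snd s"
  shows "germ_eq X r s"
proof -
  obtain k where "k \<in> cOb (pIdx X)" "arrs (pIdx X) (fst r) k \<noteq> {}" "arrs (pIdx X) (fst s) k \<noteq> {}"
    using assms(2-4) unfolding directed_def by blast
  then show ?thesis unfolding germ_eq_def using assms(1,5) by fastforce
qed

lemma pro_eq_same_maps_id_tr: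
  assumes "\<And>u. pTr X u = id" "directed (pIdx X)" "well_indexed X Y \<phi>" "well_indexed X Y \<psi>"
    "\<And>j. j \<in> cOb (pIdx Y) \<Longrightarrow> snd (\<phi> j) = snd (\<psi> j)"
  shows "pro_eq X Y \<phi> \<psi>"
  using assms unfolding pro_eq_def well_indexed_def by (auto intro!: germ_eq_same_map_id_tr)

section \<open>The group object X\<close>

lemma realX_simps [simp]:
  "pIdx realX = nat_pos_cat" "pFib realX n = {-1 / real n <..< 1 / real n}" "pTr realX u = id"
  by (auto simp: realX_def)

lemma nat_pos_cat_simps [simp]:
  "cOb nat_pos_cat = {n. 1 \<le> n}" "cAr nat_pos_cat = {(m, n). 1 \<le> m \<and> m \<le> n}"
  "cDom nat_pos_cat = fst" "cCod nat_pos_cat = snd"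
  by (simp_all add: nat_pos_cat_def)

lemma arrs_nat_pos_cat: "arrs nat_pos_cat i k = (if 1 \<le> i \<and> i \<le> k then {(i, k)} else {})"
  by (auto simp: arrs_def)

lemma filtered_nat_pos_cat: "filtered_cat nat_pos_cat"
  unfolding filtered_cat_def category_def
  by (auto simp: nat_pos_cat_def arrs_def) (metis max.cobounded1 max.cobounded2 order_trans)

lemma directed_realX: "directed (pIdx realX)"
  by (simp add: filtered_nat_pos_cat filtered_cat_directed)

lemma realX_fib_mono: "1 \<le> m \<Longrightarrow> m \<le> n \<Longrightarrow> x \<in> pFib realX n \<Longrightarrow> x \<in> pFib realX m"
  using frac_le[of 1 1 "real m" "real n"] by auto

lemma pro_set_realX: "pro_set realX"
  unfolding pro_set_def using filtered_nat_pos_cat realX_fib_mono by (auto simp: nat_pos_cat_def)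

lemma realX_zero_hom: "pro_hom pro_one realX realX_zero"
  unfolding pro_hom_def realX_zero_def
  by (auto intro!: germ_eq_same_map_id_tr directed_pro_one)

lemma realX_neg_hom: "pro_hom realX realX realX_neg"
  unfolding pro_hom_def realX_neg_def
  by (auto intro!: germ_eq_same_map_id_tr directed_realX)

lemma realX_add_hom: "pro_hom (pro_prod realX realX) realX realX_add"
  unfolding pro_hom_def realX_add_def
  by (auto intro!: germ_eq_same_map_id_tr directed_pro_prod directed_realX)

lemma pro_hom_well_indexed: "pro_hom X Y \<phi> \<Longrightarrow> well_indexed X Y \<phi>"
  by (simp add: pro_hom_def well_indexed_def)

lemma realX_nonempty: "cOb (pIdx realX) \<noteq> {}"
  by auto

lemmas realX_structure_well_indexed =
  realX_zero_hom[THEN pro_hom_well_indexed] realX_neg_hom[THEN pro_hom_well_indexed]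
  realX_add_hom[THEN pro_hom_well_indexed]
  well_indexed_pro_comp well_indexed_pro_id well_indexed_pro_bang well_indexed_pro_fst
  well_indexed_pro_snd well_indexed_pro_pair directed_pro_prod directed_realX
  pro_prod_nonempty realX_nonempty

lemma realX_abelian_group_obj: "abelian_group_obj realX realX_zero realX_neg realX_add"
  unfolding abelian_group_obj_def group_obj_def pro_prod_map_def pro_assoc_def pro_swap_def
  apply (intro conjI pro_set_realX realX_zero_hom realX_neg_hom realX_add_hom)
  apply (rule pro_eq_same_maps_id_tr, simp add: map_prod.id, (rule realX_structure_well_indexed)+,
      simp add: pro_pair_snd_id_tr pro_comp_def realX_add_def realX_zero_def realX_neg_def
        pro_id_def pro_fst_def pro_snd_def pro_bang_def add_ac fun_eq_iff)+
  done

lemma realX_not_iso_pro_one: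
  "\<not> (\<exists>\<phi> \<psi>. pro_hom realX pro_one \<phi> \<and> pro_hom pro_one realX \<psi>
        \<and> pro_eq realX realX (pro_comp \<psi> \<phi>) pro_id \<and> pro_eq pro_one pro_one (pro_comp \<phi> \<psi>) pro_id)"
proof
  assume "\<exists>\<phi> \<psi>. pro_hom realX pro_one \<phi> \<and> pro_hom pro_one realX \<psi>
        \<and> pro_eq realX realX (pro_comp \<psi> \<phi>) pro_id \<and> pro_eq pro_one pro_one (pro_comp \<phi> \<psi>) pro_id"
  then obtain \<phi> :: "unit \<Rightarrow> nat \<times> (real \<Rightarrow> unit)" and \<psi>
    where "pro_eq realX realX (pro_comp \<psi> \<phi>) pro_id"
    by blast
  then have "germ_eq realX (pro_comp \<psi> \<phi> 1) (pro_id 1)"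
    by (simp add: pro_eq_def)
  then obtain k where k: "1 \<le> k"
    and id_near_0: "\<forall>x\<in>pFib realX k. snd (\<psi> 1) (snd (\<phi> (fst (\<psi> 1))) x) = x"
    by (auto simp: germ_eq_def pro_comp_def pro_id_def arrs_nat_pos_cat split: if_splits)
  have "0 \<in> pFib realX k" "1 / (2 * real k) \<in> pFib realX k"
    using k by (auto simp: field_simps)
  then have "(0::real) = 1 / (2 * real k)"
    using id_near_0 by (metis (full_types) old.unit.exhaust)
  then show False using k by simp
qed

section \<open>Homomorphisms from pro-groups into X\<close>

lemma group_additive_bounded_eq_zero:
  fixes F :: "'a \<Rightarrow> real"
  assumes H: "group H"
    and additive: "\<And>x y. x \<in> carrier H \<Longrightarrow> y \<in> carrier H \<Longrightarrow> F (x \<otimes>\<^bsub>H\<^esub> y) = F x + F y"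
    and bounded: "\<And>x. x \<in> carrier H \<Longrightarrow> \<bar>F x\<bar> < B"
    and x: "x \<in> carrier H"
  shows "F x = 0"
proof (rule ccontr)
  assume nonzero: "F x \<noteq> 0"
  interpret group H by (fact H)
  have F_pow: "F (x [^]\<^bsub>H\<^esub> m) = real m * F x" for m :: nat
  proof (induction m)
    case 0
    have "F \<one>\<^bsub>H\<^esub> = F \<one>\<^bsub>H\<^esub> + F \<one>\<^bsub>H\<^esub>"
      using additive[of "\<one>\<^bsub>H\<^esub>" "\<one>\<^bsub>H\<^esub>"] by simp
    then show ?case by simp
  next
    case (Suc m)
    then show ?case
      using additive[of "x [^]\<^bsub>H\<^esub> m" x] x by (simp add: algebra_simps)
  qed
  obtain m :: nat where "B / \<bar>F x\<bar> < real m"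
    using reals_Archimedean2 by blast
  then have "B < \<bar>F (x [^]\<^bsub>H\<^esub> m)\<bar>"
    using nonzero by (simp add: F_pow abs_mult field_simps)
  then show False
    using bounded[of "x [^]\<^bsub>H\<^esub> m"] x by simp
qed

lemma pro_group_pro_set: "pro_group G grp \<Longrightarrow> pro_set G"
  by (simp add: pro_group_def)

lemma pro_group_level:
  "pro_group G grp \<Longrightarrow> i \<in> cOb (pIdx G) \<Longrightarrow> group (grp i) \<and> carrier (grp i) = pFib G i"
  by (simp add: pro_group_def)

lemma pro_group_tr_mult:
  assumes G: "pro_group G grp" and u: "u \<in> arrs (pIdx G) i j"
    and "x \<in> pFib G j" "y \<in> pFib G j"
  shows "pTr G u (x \<otimes>\<^bsub>grp j\<^esub> y) = pTr G u x \<otimes>\<^bsub>grp i\<^esub> pTr G u y"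
proof -
  have "pTr G u \<in> hom (grp j) (grp i)"
    using G u unfolding pro_group_def arrs_def by auto
  moreover have "carrier (grp j) = pFib G j"
    using pro_group_level[OF G] pro_set_arrs_objs[OF pro_group_pro_set[OF G] u] by blast
  ultimately show ?thesis using assms(3,4) by (simp add: hom_mult)
qed

lemma pro_group_bounded_relation_eventually_zero:
  fixes f f' :: "'x \<Rightarrow> real"
  assumes G: "pro_group G grp" and bounded: "\<And>x. x \<in> pFib G i \<Longrightarrow> \<bar>f x\<bar> < B"
    and u1: "u1 \<in> arrs (pIdx G) i k1" and u2: "u2 \<in> arrs (pIdx G) i k2"
    and \<alpha>: "\<alpha> \<in> arrs (pIdx G) i' k1" and \<beta>: "\<beta> \<in> arrs (pIdx G) i' k2"
    and rel: "\<And>g h. g \<in> pFib G k1 \<Longrightarrow> h \<in> pFib G k2 \<Longrightarrow>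
       f (pTr G u1 g \<otimes>\<^bsub>grp i\<^esub> pTr G u2 h) = f' (pTr G \<alpha> g) + f' (pTr G \<beta> h)"
    and r: "r \<in> arrs (pIdx G) i' k" and s: "s \<in> arrs (pIdx G) i k"
    and agree: "\<And>x. x \<in> pFib G k \<Longrightarrow> f' (pTr G r x) = f (pTr G s x)"
  shows "\<exists>K P. K \<in> cOb (pIdx G) \<and> P \<in> arrs (pIdx G) i K \<and> (\<forall>x\<in>pFib G K. f (pTr G P x) = 0)"
proof -
  have ps: "pro_set G" using G by (rule pro_group_pro_set)
  obtain K0 P0 Q0 where "K0 \<in> cOb (pIdx G)" and P0: "P0 \<in> arrs (pIdx G) i K0" and Q0: "Q0 \<in> arrs (pIdx G) i' K0"
    and rel0: "\<And>x y. x \<in> pFib G K0 \<Longrightarrow> y \<in> pFib G K0 \<Longrightarrow>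
       f (pTr G P0 x \<otimes>\<^bsub>grp i\<^esub> pTr G P0 y) = f' (pTr G Q0 x) + f' (pTr G Q0 y)"
    by (rule pro_set_relation_single_level[where f = f and f' = f' and m = "\<lambda>x y. x \<otimes>\<^bsub>grp i\<^esub> y",
          OF ps u1 u2 \<alpha> \<beta> rel]) auto
  obtain K P where K: "K \<in> cOb (pIdx G)" and P: "P \<in> arrs (pIdx G) i K"
    and additive: "\<And>x y. x \<in> pFib G K \<Longrightarrow> y \<in> pFib G K \<Longrightarrow>
       f (pTr G P x \<otimes>\<^bsub>grp i\<^esub> pTr G P y) = f (pTr G P x) + f (pTr G P y)"
    by (rule pro_set_relation_identify[OF ps P0 Q0 rel0 r s agree]) auto
  have level: "group (grp K)" "carrier (grp K) = pFib G K"
    using pro_group_level[OF G K] by auto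
  have "f (pTr G P x) = 0" if "x \<in> pFib G K" for x
  proof (rule group_additive_bounded_eq_zero[OF level(1), where F = "\<lambda>x. f (pTr G P x)"])
    show "f (pTr G P (x \<otimes>\<^bsub>grp K\<^esub> y)) = f (pTr G P x) + f (pTr G P y)"
      if "x \<in> carrier (grp K)" "y \<in> carrier (grp K)" for x y
      using that level additive pro_group_tr_mult[OF G P] by simp
    show "\<bar>f (pTr G P x)\<bar> < B" if "x \<in> carrier (grp K)" for x
      using that level bounded pro_set_tr_in[OF ps P] by simp
  qed (use that level in simp)
  then show ?thesis using K P by blast
qed

lemma grp_obj_hom_realX_relation:
  assumes G: "pro_group G grp" and \<phi>: "grp_obj_hom G (pg_mult grp) realX realX_add \<phi>"
    and n: "1 \<le> n"
  obtains k1 k2 u1 u2 \<alpha> \<beta>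
  where "u1 \<in> arrs (pIdx G) (fst (\<phi> n)) k1" "u2 \<in> arrs (pIdx G) (fst (\<phi> n)) k2"
    "\<alpha> \<in> arrs (pIdx G) (fst (\<phi> (2 * n))) k1" "\<beta> \<in> arrs (pIdx G) (fst (\<phi> (2 * n))) k2"
    "\<And>g h. g \<in> pFib G k1 \<Longrightarrow> h \<in> pFib G k2 \<Longrightarrow>
       snd (\<phi> n) (pTr G u1 g \<otimes>\<^bsub>grp (fst (\<phi> n))\<^esub> pTr G u2 h)
       = snd (\<phi> (2 * n)) (pTr G \<alpha> g) + snd (\<phi> (2 * n)) (pTr G \<beta> h)"
proof -
  let ?C = "pIdx G" and ?i = "fst (\<phi> n)" and ?i' = "fst (\<phi> (2 * n))"
  have ps: "pro_set G" using G by (rule pro_group_pro_set)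
  have hom: "pro_hom G realX \<phi>"
    and mult: "pro_eq (pro_prod G G) realX (pro_comp \<phi> (pg_mult grp))
                 (pro_comp realX_add (pro_prod_map G G \<phi> \<phi>))"
    using \<phi> by (auto simp: grp_obj_hom_def)
  have i': "?i' \<in> cOb ?C" using hom n unfolding pro_hom_def by auto
  define o0 where "o0 = (SOME j. j \<in> cOb ?C)"
  have o0: "o0 \<in> cOb ?C" using i' o0_def by (metis someI)
  have dir: "directed (pIdx G)"
    using ps unfolding pro_set_def by (blast intro: filtered_cat_directed)
  have dir2: "directed (pIdx (pro_prod G G))"
    using directed_pro_prod[OF dir dir] .
  have fst_\<phi>: "fst (pro_comp \<phi> (pro_fst G G) (2 * n)) = (?i', o0)"
    "fst (pro_comp \<phi> (pro_snd G G) (2 * n)) = (o0, ?i')"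
    by (simp_all add: pro_comp_def pro_fst_def pro_snd_def o0_def)
  have "fst (pro_comp \<phi> (pro_fst G G) (2 * n)) \<in> cOb (pIdx (pro_prod G G))"
    "fst (pro_comp \<phi> (pro_snd G G) (2 * n)) \<in> cOb (pIdx (pro_prod G G))"
    using i' o0 by (simp_all add: fst_\<phi>)
  then obtain c a b where
    pm: "pro_prod_map G G \<phi> \<phi> (2 * n, 2 * n) = (c, \<lambda>z.
        (snd (pro_comp \<phi> (pro_fst G G) (2 * n)) (pTr (pro_prod G G) a z),
         snd (pro_comp \<phi> (pro_snd G G) (2 * n)) (pTr (pro_prod G G) b z)))"
    and "c \<in> cOb (pIdx (pro_prod G G))"
    and a: "a \<in> arrs (pIdx (pro_prod G G)) (fst (pro_comp \<phi> (pro_fst G G) (2 * n))) c"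
    and b: "b \<in> arrs (pIdx (pro_prod G G)) (fst (pro_comp \<phi> (pro_snd G G) (2 * n))) c"
    unfolding pro_prod_map_def by (rule pro_pair_spec[OF dir2])
  obtain c1 c2 a1 a2 b1 b2 where c: "c = (c1, c2)" "a = (a1, a2)" "b = (b1, b2)"
    by (metis prod.collapse)
  have a1: "a1 \<in> arrs ?C ?i' c1" and b2: "b2 \<in> arrs ?C ?i' c2"
    using a b by (auto simp: c fst_\<phi> arrs_cat_prod)
  have "germ_eq (pro_prod G G) (pro_comp \<phi> (pg_mult grp) n) (pro_comp realX_add (pro_prod_map G G \<phi> \<phi>) n)"
    using mult n by (auto simp: pro_eq_def)
  then have "germ_eq (pro_prod G G) ((?i, ?i), \<lambda>p. snd (\<phi> n) (fst p \<otimes>\<^bsub>grp ?i\<^esub> snd p))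
      ((c1, c2), \<lambda>z. snd (\<phi> (2 * n)) (pTr G a1 (fst z)) + snd (\<phi> (2 * n)) (pTr G b2 (snd z)))"
    by (simp add: pro_comp_def pg_mult_def realX_add_def pm c pro_fst_def pro_snd_def comp_def)
  then obtain k1 k2 u1 u2 v1 v2 where u1: "u1 \<in> arrs ?C ?i k1" and u2: "u2 \<in> arrs ?C ?i k2"
    and v1: "v1 \<in> arrs ?C c1 k1" and v2: "v2 \<in> arrs ?C c2 k2"
    and rel: "\<forall>g\<in>pFib G k1. \<forall>h\<in>pFib G k2. snd (\<phi> n) (pTr G u1 g \<otimes>\<^bsub>grp ?i\<^esub> pTr G u2 h)
       = snd (\<phi> (2 * n)) (pTr G a1 (pTr G v1 g)) + snd (\<phi> (2 * n)) (pTr G b2 (pTr G v2 h))"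
    unfolding germ_eq_def by (auto simp: arrs_cat_prod)
  show thesis
  proof (rule that[OF u1 u2 pro_set_comp_arrs[OF ps a1 v1] pro_set_comp_arrs[OF ps b2 v2]])
    fix g h assume "g \<in> pFib G k1" "h \<in> pFib G k2"
    then show "snd (\<phi> n) (pTr G u1 g \<otimes>\<^bsub>grp ?i\<^esub> pTr G u2 h)
        = snd (\<phi> (2 * n)) (pTr G (cCmp ?C v1 a1) g) + snd (\<phi> (2 * n)) (pTr G (cCmp ?C v2 b2) h)"
      using rel pro_set_tr_comp[OF ps a1 v1] pro_set_tr_comp[OF ps b2 v2] by simp
  qed
qed

lemma grp_obj_hom_realX_eventually_zero:
  assumes G: "pro_group G grp" and \<phi>: "grp_obj_hom G (pg_mult grp) realX realX_add \<phi>"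
    and n: "1 \<le> n"
  shows "\<exists>K P. K \<in> cOb (pIdx G) \<and> P \<in> arrs (pIdx G) (fst (\<phi> n)) K
    \<and> (\<forall>x\<in>pFib G K. snd (\<phi> n) (pTr G P x) = 0)"
proof -
  have hom: "pro_hom G realX \<phi>" using \<phi> by (simp add: grp_obj_hom_def)
  have "snd (\<phi> n) \<in> pFib G (fst (\<phi> n)) \<rightarrow> pFib realX n"
    using hom n unfolding pro_hom_def by auto
  then have bounded: "\<bar>snd (\<phi> n) x\<bar> < 1 / real n" if "x \<in> pFib G (fst (\<phi> n))" for x
    using that by (fastforce simp: abs_less_iff)
  have compat: "\<forall>w\<in>cAr (pIdx realX). germ_eq G (fst (\<phi> (cCod (pIdx realX) w)),
      pTr realX w \<circ> snd (\<phi> (cCod (pIdx realX) w))) (\<phi> (cDom (pIdx realX) w))"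
    using hom unfolding pro_hom_def by (rule conjunct2)
  have "(n, 2 * n) \<in> cAr (pIdx realX)"
    using n by simp
  from bspec[OF compat this] have "germ_eq G (fst (\<phi> (2 * n)), snd (\<phi> (2 * n))) (\<phi> n)"
    by simp
  then obtain k r s where r: "r \<in> arrs (pIdx G) (fst (\<phi> (2 * n))) k"
    and s: "s \<in> arrs (pIdx G) (fst (\<phi> n)) k"
    and agree: "\<And>x. x \<in> pFib G k \<Longrightarrow> snd (\<phi> (2 * n)) (pTr G r x) = snd (\<phi> n) (pTr G s x)"
    unfolding germ_eq_def by auto
  show ?thesis
  proof (rule grp_obj_hom_realX_relation[OF G \<phi> n])
    fix k1 k2 u1 u2 \<alpha> \<beta>
    assume u: "u1 \<in> arrs (pIdx G) (fst (\<phi> n)) k1" "u2 \<in> arrs (pIdx G) (fst (\<phi> n)) k2"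
      and \<alpha>\<beta>: "\<alpha> \<in> arrs (pIdx G) (fst (\<phi> (2 * n))) k1" "\<beta> \<in> arrs (pIdx G) (fst (\<phi> (2 * n))) k2"
      and rel: "\<And>g h. g \<in> pFib G k1 \<Longrightarrow> h \<in> pFib G k2 \<Longrightarrow>
         snd (\<phi> n) (pTr G u1 g \<otimes>\<^bsub>grp (fst (\<phi> n))\<^esub> pTr G u2 h)
         = snd (\<phi> (2 * n)) (pTr G \<alpha> g) + snd (\<phi> (2 * n)) (pTr G \<beta> h)"
    show ?thesis
      by (rule pro_group_bounded_relation_eventually_zero[OF G bounded u \<alpha>\<beta> rel r s agree])
  qed
qed

lemma grp_obj_hom_realX_trivial:
  assumes G: "pro_group G grp" and \<phi>: "grp_obj_hom G (pg_mult grp) realX realX_add \<phi>"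
  shows "pro_eq G realX \<phi> (pro_comp realX_zero (pro_bang G))"
  unfolding pro_eq_def
proof
  fix n assume "n \<in> cOb (pIdx realX)"
  then have "1 \<le> n" by simp
  then obtain K P where K: "K \<in> cOb (pIdx G)" and P: "P \<in> arrs (pIdx G) (fst (\<phi> n)) K"
    and zero: "\<forall>x\<in>pFib G K. snd (\<phi> n) (pTr G P x) = 0"
    using grp_obj_hom_realX_eventually_zero[OF G \<phi>] by blast
  have ps: "pro_set G" using G by (rule pro_group_pro_set)
  define o0 where "o0 = (SOME i. i \<in> cOb (pIdx G))"
  have o0: "o0 \<in> cOb (pIdx G)" using K o0_def by (metis someI)
  obtain k t q where k: "k \<in> cOb (pIdx G)" and t: "t \<in> arrs (pIdx G) K k"
    and q: "q \<in> arrs (pIdx G) o0 k"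
    using pro_set_cocone[OF ps K o0] by blast
  have "\<forall>x\<in>pFib G k. snd (\<phi> n) (pTr G (cCmp (pIdx G) t P) x) = 0"
    using pro_set_tr_comp[OF ps P t] pro_set_tr_in[OF ps t] zero by simp
  then have "germ_eq G (\<phi> n) (o0, \<lambda>_. 0)"
    unfolding germ_eq_def using k q pro_set_comp_arrs[OF ps P t] by fastforce
  then show "germ_eq G (\<phi> n) (pro_comp realX_zero (pro_bang G) n)"
    by (simp add: pro_comp_def realX_zero_def pro_bang_def o0_def comp_def)
qed

lemma no_grp_obj_iso_realX:
  assumes G: "pro_group G grp"
  shows "\<not> grp_obj_iso G (pg_mult grp) realX realX_add"
proof
  assume "grp_obj_iso G (pg_mult grp) realX realX_add"
  then obtain \<phi> \<psi> where \<phi>: "grp_obj_hom G (pg_mult grp) realX realX_add \<phi>"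
    and \<psi>: "pro_hom realX G \<psi>" and inverse: "pro_eq realX realX (pro_comp \<phi> \<psi>) pro_id"
    unfolding grp_obj_iso_def grp_obj_hom_def by blast
  let ?i = "fst (\<phi> 1)" and ?f = "snd (\<phi> 1)"
  obtain K P where K: "K \<in> cOb (pIdx G)" and P: "P \<in> arrs (pIdx G) ?i K"
    and zero: "\<forall>x\<in>pFib G K. ?f (pTr G P x) = 0"
    using grp_obj_hom_realX_eventually_zero[OF G \<phi>, of 1] by auto
  have P_arr: "P \<in> cAr (pIdx G)" "cDom (pIdx G) P = ?i" "cCod (pIdx G) P = K"
    using P by (auto simp: arrs_def)
  have \<psi>K: "snd (\<psi> K) \<in> pFib realX (fst (\<psi> K)) \<rightarrow> pFib G K" "1 \<le> fst (\<psi> K)"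
    using \<psi> K unfolding pro_hom_def by auto
  have "germ_eq realX (fst (\<psi> K), pTr G P \<circ> snd (\<psi> K)) (\<psi> ?i)"
    using \<psi> P_arr unfolding pro_hom_def by metis
  then obtain k1 where k1: "fst (\<psi> K) \<le> k1"
    and compat: "\<forall>x\<in>pFib realX k1. pTr G P (snd (\<psi> K) x) = snd (\<psi> ?i) x"
    unfolding germ_eq_def by (auto simp: arrs_nat_pos_cat split: if_splits)
  have "germ_eq realX (pro_comp \<phi> \<psi> 1) (pro_id 1)"
    using inverse by (simp add: pro_eq_def)
  then obtain k2 where k2: "1 \<le> k2" and id_near_0: "\<forall>x\<in>pFib realX k2. ?f (snd (\<psi> ?i) x) = x"
    unfolding germ_eq_def by (auto simp: arrs_nat_pos_cat pro_comp_def pro_id_def split: if_splits)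
  define x :: real where "x = 1 / (2 * real (max k1 k2))"
  have "x \<in> pFib realX (max k1 k2)" "x \<noteq> 0"
    using k2 by (auto simp: x_def field_simps)
  then have x: "x \<in> pFib realX k1" "x \<in> pFib realX k2" "x \<in> pFib realX (fst (\<psi> K))" "x \<noteq> 0"
    using realX_fib_mono k1 k2 \<psi>K(2) by (metis max.cobounded1 max.cobounded2 order_trans)+
  have "?f (snd (\<psi> ?i) x) = 0"
    using zero compat \<psi>K(1) x by (metis PiE)
  then show False using id_near_0 x by simp
qed

theorem mainTheorem15:
  shows "abelian_group_obj realX realX_zero realX_neg realX_add
    \<and> \<not> (\<exists>\<phi> \<psi>. pro_hom realX pro_one \<phi> \<and> pro_hom pro_one realX \<psi>
            \<and> pro_eq realX realX (pro_comp \<psi> \<phi>) pro_id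
            \<and> pro_eq pro_one pro_one (pro_comp \<phi> \<psi>) pro_id)
    \<and> (\<forall>(G :: ('o, 'a, 'g) proset) grp \<phi>.
          pro_group G grp \<and> grp_obj_hom G (pg_mult grp) realX realX_add \<phi>
          \<longrightarrow> pro_eq G realX \<phi> (pro_comp realX_zero (pro_bang G)))
    \<and> (\<forall>(G :: ('o, 'a, 'g) proset) grp.
          pro_group G grp \<longrightarrow> \<not> grp_obj_iso G (pg_mult grp) realX realX_add)"
  using realX_abelian_group_obj realX_not_iso_pro_one grp_obj_hom_realX_trivial no_grp_obj_iso_realX
  by blast

end
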